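(* Let $\mathbb{Q}^*_+$ act on the ring $\mathcal{A}_f$ of finite adeles by multiplication via the diagonal embedding. For each $a=(a_p)_{p\in\mathcal{P}}\in\mathcal{A}_f$, the closure of the orbit $\mathbb{Q}^*_+a$ is $$\overline{\mathbb{Q}^*_+ a}=\{b\in\mathcal{A}_f : \text{for every } p\in\mathcal{P},\ a_p=0 \implies b_p=0\}.$$
   Context: $\mathcal{P}$ denotes the set of prime numbers; $\mathbb{Q}_p$, $\mathbb{Z}_p$ are the $p$-adic numbers and $p$-adic integers. $\mathcal{A}_f=\{(a_p)\in\prod_{p}\mathbb{Q}_p : a_p\in\mathbb{Z}_p \text{ for all but finitely many } p\}$ with componentwise operations and the restricted product topology, in which the sets $\prod_{p\in F}V_p\times\prod_{p\notin F}\mathbb{Z}_p$ ($F$ finite, $V_p$ a neighbourhood of $0$ in $\mathbb{Q}_p$) form a neighbourhood base at $0$. $\mathbb{Q}$ embeds diagonally in $\mathcal{A}_f$. *)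

theory Defs
  imports "HOL-Analysis.Analysis" "HOL-Computational_Algebra.Primes"
begin

definition pval :: "nat \<Rightarrow> rat \<Rightarrow> int" where
  "pval p q = (case quotient_of q of (a, b) \<Rightarrow>
      int (multiplicity (int p) a) - int (multiplicity (int p) b))"

definition pabs :: "nat \<Rightarrow> rat \<Rightarrow> real" where
  "pabs p q = (if q = 0 then 0 else real p powr (- real_of_int (pval p q)))"

definition pcauchy :: "nat \<Rightarrow> (nat \<Rightarrow> rat) \<Rightarrow> bool" where
  "pcauchy p X \<longleftrightarrow> (\<forall>e>0. \<exists>N. \<forall>m\<ge>N. \<forall>n\<ge>N. pabs p (X m - X n) < e)"

definition prel :: "nat \<Rightarrow> ((nat \<Rightarrow> rat) \<times> (nat \<Rightarrow> rat)) set" where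
  "prel p = {(X, Y). pcauchy p X \<and> pcauchy p Y \<and> (\<lambda>n. pabs p (X n - Y n)) \<longlonglongrightarrow> 0}"

type_synonym padic = "(nat \<Rightarrow> rat) set"

definition Qp :: "nat \<Rightarrow> padic set" where
  "Qp p = {X. pcauchy p X} // prel p"

definition pclass :: "nat \<Rightarrow> (nat \<Rightarrow> rat) \<Rightarrow> padic" where
  "pclass p X = prel p `` {X}"

definition prep :: "padic \<Rightarrow> nat \<Rightarrow> rat" where
  "prep x = (SOME X. X \<in> x)"

definition pzero :: "nat \<Rightarrow> padic" where
  "pzero p = pclass p (\<lambda>_. 0)"

definition pof_rat :: "nat \<Rightarrow> rat \<Rightarrow> padic" where
  "pof_rat p q = pclass p (\<lambda>_. q)"

definition padd :: "nat \<Rightarrow> padic \<Rightarrow> padic \<Rightarrow> padic" where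
  "padd p x y = pclass p (\<lambda>n. prep x n + prep y n)"

definition psub :: "nat \<Rightarrow> padic \<Rightarrow> padic \<Rightarrow> padic" where
  "psub p x y = pclass p (\<lambda>n. prep x n - prep y n)"

definition pmul :: "nat \<Rightarrow> padic \<Rightarrow> padic \<Rightarrow> padic" where
  "pmul p x y = pclass p (\<lambda>n. prep x n * prep y n)"

definition pnorm :: "nat \<Rightarrow> padic \<Rightarrow> real" where
  "pnorm p x = lim (\<lambda>n. pabs p (prep x n))"

definition Zp :: "nat \<Rightarrow> padic set" where
  "Zp p = {x \<in> Qp p. pnorm p x \<le> 1}"

definition pnhd0 :: "nat \<Rightarrow> padic set \<Rightarrow> bool" where
  "pnhd0 p V \<longleftrightarrow> (\<exists>e>0. {x \<in> Qp p. pnorm p x < e} \<subseteq> V)"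

text \<open>An adele is a family indexed by naturals; only prime indices carry data,
  non-prime indices are fixed to the dummy value {}.\<close>
definition finite_adeles :: "(nat \<Rightarrow> padic) set" where
  "finite_adeles = {a. (\<forall>p. prime p \<longrightarrow> a p \<in> Qp p) \<and> (\<forall>p. \<not> prime p \<longrightarrow> a p = {})
                     \<and> finite {p. prime p \<and> a p \<notin> Zp p}}"

definition adele_sub :: "(nat \<Rightarrow> padic) \<Rightarrow> (nat \<Rightarrow> padic) \<Rightarrow> (nat \<Rightarrow> padic)" where
  "adele_sub a b = (\<lambda>p. if prime p then psub p (a p) (b p) else {})"

definition adele_scale :: "rat \<Rightarrow> (nat \<Rightarrow> padic) \<Rightarrow> (nat \<Rightarrow> padic)" where
  "adele_scale q a = (\<lambda>p. if prime p then pmul p (pof_rat p q) (a p) else {})"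

definition adele_nhd0 :: "(nat \<Rightarrow> padic) set \<Rightarrow> bool" where
  "adele_nhd0 U \<longleftrightarrow> (\<exists>F V. finite F \<and> (\<forall>p\<in>F. prime p \<and> pnhd0 p (V p)) \<and>
      U = {x \<in> finite_adeles. \<forall>p. prime p \<longrightarrow> x p \<in> (if p \<in> F then V p else Zp p)})"

text \<open>Restricted product topology: W open iff it contains a translate x + U of a
  basic neighbourhood U of 0 around each of its points x.\<close>
definition adele_topology :: "(nat \<Rightarrow> padic) topology" where
  "adele_topology = topology (\<lambda>W. W \<subseteq> finite_adeles \<and>
      (\<forall>x\<in>W. \<exists>U. adele_nhd0 U \<and> {y \<in> finite_adeles. adele_sub y x \<in> U} \<subseteq> W))"

end

(*
  Multiplication by a rational fixes 0 in every Q_p, and the adeles with non-zero p-component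
  form an open set; hence every point of the orbit closure vanishes wherever a does.

  Conversely, let b vanish wherever a does. A basic neighbourhood of b imposes p-adic closeness
  at a finite set of primes and integrality elsewhere; enlarge this set to a finite set S that
  also contains the primes where a or b is not integral. For p in S with a_p <> 0, every rational
  q that is p-adically close to b_p / a_p makes q a_p close to b_p, and if a_p = 0 then b_p = 0.
  Strong approximation for Q (a common denominator and the Chinese remainder theorem) gives
  q > 0 meeting these finitely many conditions while being a p-adic integer at every prime
  outside S, where q a_p - b_p is then integral as well.
*)

theory Submission
  imports Defs "HOL-Number_Theory.Cong"
begin

section \<open>The p-adic absolute value on the rationals\<close>

lemma rat_as_int_fraction:
  fixes x :: rat
  obtains a b :: int where "b > 0" "x = of_int a / of_int b"
proof -
  obtain a b where q: "quotient_of x = (a, b)" by (cases "quotient_of x") auto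
  show ?thesis using that quotient_of_denom_pos[OF q] quotient_of_div[OF q] by auto
qed

lemma pabs_of_int_divide:
  assumes p: "prime p" and a: "a \<noteq> 0" and b: "b \<noteq> 0"
  shows "pabs p (of_int a / of_int b) =
    real p powr (real (multiplicity (int p) b) - real (multiplicity (int p) a))"
proof -
  obtain a' b' where q: "quotient_of (of_int a / of_int b) = (a', b')"
    by (cases "quotient_of (of_int a / of_int b)") auto
  have b': "b' > 0" using quotient_of_denom_pos[OF q] .
  have "(of_int a / of_int b :: rat) = of_int a' / of_int b'" using quotient_of_div[OF q] .
  then have "of_int (a' * b) = (of_int (a * b') :: rat)"
    using b b' by (simp add: field_simps)
  then have cross: "a' * b = a * b'" by (simp only: of_int_eq_iff)
  have a': "a' \<noteq> 0" using cross a b b' by auto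
  have "multiplicity (int p) a' + multiplicity (int p) b = multiplicity (int p) a + multiplicity (int p) b'"
    using arg_cong[OF cross, of "multiplicity (int p)"] a a' b b' p
    by (simp add: prime_elem_multiplicity_mult_distrib)
  then have "real (multiplicity (int p) b') - real (multiplicity (int p) a') =
      real (multiplicity (int p) b) - real (multiplicity (int p) a)"
    by linarith
  then show ?thesis
    using a b by (simp add: pabs_def pval_def q)
qed

lemma pabs_nonneg: "pabs p x \<ge> 0"
  by (simp add: pabs_def)

lemma abs_pabs [simp]: "\<bar>pabs p x\<bar> = pabs p x"
  by (simp add: pabs_nonneg)

lemma pabs_0 [simp]: "pabs p 0 = 0"
  by (simp add: pabs_def)

lemma pabs_pos: "prime p \<Longrightarrow> x \<noteq> 0 \<Longrightarrow> pabs p x > 0"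
  using prime_gt_0_nat by (auto simp: pabs_def)

lemma pabs_mult:
  assumes p: "prime p"
  shows "pabs p (x * y) = pabs p x * pabs p y"
proof (cases "x = 0 \<or> y = 0")
  case False
  obtain a b where ab: "b > 0" "x = of_int a / of_int b" by (rule rat_as_int_fraction)
  obtain c d where cd: "d > 0" "y = of_int c / of_int d" by (rule rat_as_int_fraction)
  have nz: "a \<noteq> 0" "c \<noteq> 0" "b \<noteq> 0" "d \<noteq> 0" using False ab cd by auto
  have xy: "x * y = of_int (a * c) / of_int (b * d)" using ab cd by simp
  have "pabs p (x * y) =
      real p powr (real (multiplicity (int p) (b * d)) - real (multiplicity (int p) (a * c)))"
    unfolding xy by (rule pabs_of_int_divide) (use p nz in auto)
  also have "\<dots> = real p powr (real (multiplicity (int p) b) - real (multiplicity (int p) a)) *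
      real p powr (real (multiplicity (int p) d) - real (multiplicity (int p) c))"
    using p nz by (simp add: prime_elem_multiplicity_mult_distrib powr_add[symmetric] algebra_simps)
  also have "\<dots> = pabs p x * pabs p y"
    using p nz ab cd by (simp add: pabs_of_int_divide)
  finally show ?thesis .
qed auto

lemma pabs_minus: "prime p \<Longrightarrow> pabs p (- x) = pabs p x"
  using pabs_mult[of p "-1" x] pabs_of_int_divide[of p "-1" 1]
  by (simp add: multiplicity_unit_right)

lemma pabs_minus_commute: "prime p \<Longrightarrow> pabs p (x - y) = pabs p (y - x)"
  using pabs_minus[of p "x - y"] by simp

lemma pabs_divide:
  assumes p: "prime p"
  shows "pabs p (x / y) = pabs p x / pabs p y"
proof (cases "y = 0")
  case False
  have "pabs p x = pabs p (x / y) * pabs p y"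
    using False pabs_mult[OF p, of "x / y" y] by simp
  then show ?thesis using pabs_pos[OF p False] by (simp add: field_simps)
qed simp

lemma pabs_add_le_max:
  assumes p: "prime p"
  shows "pabs p (x + y) \<le> max (pabs p x) (pabs p y)"
proof (cases "x = 0 \<or> y = 0 \<or> x + y = 0")
  case True
  then show ?thesis using pabs_nonneg[of p x] pabs_nonneg[of p y] by (auto simp: le_max_iff_disj)
next
  case False
  obtain a b where ab: "b > 0" "x = of_int a / of_int b" by (rule rat_as_int_fraction)
  obtain c d where cd: "d > 0" "y = of_int c / of_int d" by (rule rat_as_int_fraction)
  have x: "x = of_int (a * d) / of_int (b * d)" and y: "y = of_int (c * b) / of_int (b * d)"
    using ab cd by simp_all
  have xy: "x + y = of_int (a * d + c * b) / of_int (b * d)"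
    using ab cd by (simp add: field_simps)
  have s: "a * d + c * b \<noteq> 0"
  proof
    assume "a * d + c * b = 0"
    then have "(of_int (a * d + c * b) :: rat) = 0" by simp
    then show False using False xy by simp
  qed
  have nz: "a * d \<noteq> 0" "c * b \<noteq> 0" "b * d \<noteq> 0"
    using False ab cd by auto
  let ?v = "\<lambda>z. real (multiplicity (int p) z)"
  have nu: "\<not> is_unit (int p)" using p prime_elem_not_unit[of "int p"] by simp
  have "int p ^ min (multiplicity (int p) (a * d)) (multiplicity (int p) (c * b)) dvd a * d + c * b"
    by (intro dvd_add multiplicity_dvd') auto
  then have "min (multiplicity (int p) (a * d)) (multiplicity (int p) (c * b)) \<le>
      multiplicity (int p) (a * d + c * b)"
    by (rule multiplicity_geI[OF s nu])
  then have "?v (b * d) - ?v (a * d + c * b) \<le> max (?v (b * d) - ?v (a * d)) (?v (b * d) - ?v (c * b))"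
    by linarith
  then have "real p powr (?v (b * d) - ?v (a * d + c * b)) \<le>
      real p powr (max (?v (b * d) - ?v (a * d)) (?v (b * d) - ?v (c * b)))"
    using prime_gt_1_nat[OF p] by (intro powr_mono) auto
  also have "\<dots> = max (real p powr (?v (b * d) - ?v (a * d))) (real p powr (?v (b * d) - ?v (c * b)))"
    using prime_gt_1_nat[OF p] by (simp add: max_def)
  finally show ?thesis
    using pabs_of_int_divide[OF p s nz(3)] pabs_of_int_divide[OF p nz(1,3)]
      pabs_of_int_divide[OF p nz(2,3)] xy x y
    by simp
qed

lemma pabs_triangle: "prime p \<Longrightarrow> pabs p (x + y) \<le> pabs p x + pabs p y"
  using pabs_add_le_max[of p x y] pabs_nonneg[of p] by (smt (verit))

lemma pabs_add_less: "prime p \<Longrightarrow> pabs p x < e \<Longrightarrow> pabs p y < e \<Longrightarrow> pabs p (x + y) < e"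
  using pabs_add_le_max[of p x y] by simp

lemma pabs_diff_less_trans:
  "prime p \<Longrightarrow> pabs p (x - y) < e \<Longrightarrow> pabs p (y - z) < e \<Longrightarrow> pabs p (x - z) < e"
  using pabs_add_less[of p "x - y" e "y - z"] by simp

lemma abs_pabs_diff_le: "prime p \<Longrightarrow> \<bar>pabs p x - pabs p y\<bar> \<le> pabs p (x - y)"
  using pabs_triangle[of p "x - y" y] pabs_triangle[of p "y - x" x] pabs_minus_commute[of p x y]
  by auto

lemma pcauchy_const: "pcauchy p (\<lambda>_. c)"
  by (simp add: pcauchy_def)

lemma pcauchy_diff:
  assumes p: "prime p" and X: "pcauchy p X" and Y: "pcauchy p Y"
  shows "pcauchy p (\<lambda>n. X n - Y n)"
  unfolding pcauchy_def
proof (intro allI impI)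
  fix e :: real
  assume "e > 0"
  then obtain M N where M: "\<forall>m\<ge>M. \<forall>n\<ge>M. pabs p (X m - X n) < e"
    and N: "\<forall>m\<ge>N. \<forall>n\<ge>N. pabs p (Y m - Y n) < e"
    using X Y unfolding pcauchy_def by meson
  have "pabs p (X m - Y m - (X n - Y n)) < e" if "m \<ge> max M N" "n \<ge> max M N" for m n
  proof -
    have "X m - Y m - (X n - Y n) = (X m - X n) + (Y n - Y m)" by simp
    moreover have "pabs p (X m - X n) < e" "pabs p (Y n - Y m) < e" using M N that by auto
    ultimately show ?thesis using pabs_add_less[OF p] by metis
  qed
  then show "\<exists>N. \<forall>m\<ge>N. \<forall>n\<ge>N. pabs p (X m - Y m - (X n - Y n)) < e" by blast
qed

lemma pcauchy_cmult:
  assumes p: "prime p" and X: "pcauchy p X"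
  shows "pcauchy p (\<lambda>n. c * X n)"
proof (cases "c = 0")
  case False
  have c: "pabs p c > 0" using pabs_pos[OF p False] .
  show ?thesis
    unfolding pcauchy_def
  proof (intro allI impI)
    fix e :: real
    assume "e > 0"
    then obtain N where N: "\<forall>m\<ge>N. \<forall>n\<ge>N. pabs p (X m - X n) < e / pabs p c"
      using X c unfolding pcauchy_def by (meson divide_pos_pos)
    have "pabs p (c * X m - c * X n) < e" if "m \<ge> N" "n \<ge> N" for m n
    proof -
      have "pabs p (c * X m - c * X n) = pabs p c * pabs p (X m - X n)"
        by (simp add: pabs_mult[OF p, symmetric] right_diff_distrib)
      also have "\<dots> < pabs p c * (e / pabs p c)"
        using N that c by (intro mult_strict_left_mono) auto
      finally show ?thesis using c by simp
    qed
    then show "\<exists>N. \<forall>m\<ge>N. \<forall>n\<ge>N. pabs p (c * X m - c * X n) < e" by blast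
  qed
qed (simp add: pcauchy_const)

lemma pcauchy_pabs_convergent:
  assumes p: "prime p" and X: "pcauchy p X"
  shows "convergent (\<lambda>n. pabs p (X n))"
proof -
  have "Cauchy (\<lambda>n. pabs p (X n))"
  proof (rule CauchyI)
    fix e :: real
    assume "e > 0"
    then obtain N where N: "\<forall>m\<ge>N. \<forall>n\<ge>N. pabs p (X m - X n) < e"
      using X unfolding pcauchy_def by meson
    have "norm (pabs p (X m) - pabs p (X n)) < e" if "m \<ge> N" "n \<ge> N" for m n
    proof -
      have "pabs p (X m - X n) < e" using N that by blast
      then show ?thesis using abs_pabs_diff_le[OF p, of "X m" "X n"] by simp
    qed
    then show "\<exists>N. \<forall>m\<ge>N. \<forall>n\<ge>N. norm (pabs p (X m) - pabs p (X n)) < e" by blast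
  qed
  then show ?thesis by (simp add: Cauchy_convergent_iff)
qed

lemma pcauchy_pabs_bounded:
  assumes p: "prime p" and X: "pcauchy p X"
  obtains B where "B > 0" "\<And>n. pabs p (X n) \<le> B"
proof -
  obtain K where "K > 0" "\<forall>n. norm (pabs p (X n)) \<le> K"
    using BseqD[OF convergent_imp_Bseq[OF pcauchy_pabs_convergent[OF p X]]] by blast
  then show ?thesis using that[of K] abs_of_nonneg[OF pabs_nonneg] by simp
qed

lemma pcauchy_if_close:
  assumes p: "prime p" and Y: "pcauchy p Y" and close: "(\<lambda>n. pabs p (W n - Y n)) \<longlonglongrightarrow> 0"
  shows "pcauchy p W"
  unfolding pcauchy_def
proof (intro allI impI)
  fix e :: real
  assume e: "e > 0"
  obtain M where M: "\<forall>m\<ge>M. \<forall>n\<ge>M. pabs p (Y m - Y n) < e"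
    using Y e unfolding pcauchy_def by meson
  obtain N where N: "\<forall>n\<ge>N. pabs p (W n - Y n) < e"
    using order_tendstoD(2)[OF close e] by (auto simp: eventually_sequentially)
  have "pabs p (W m - W n) < e" if "m \<ge> max M N" "n \<ge> max M N" for m n
  proof -
    have close_m: "pabs p (W m - Y m) < e" and close_n: "pabs p (Y n - W n) < e"
      using N that pabs_minus_commute[OF p, of "Y n" "W n"] by auto
    have "pabs p (Y m - Y n) < e" using M that by auto
    with close_m have "pabs p (W m - Y n) < e" by (rule pabs_diff_less_trans[OF p])
    from this close_n show ?thesis by (rule pabs_diff_less_trans[OF p])
  qed
  then show "\<exists>N. \<forall>m\<ge>N. \<forall>n\<ge>N. pabs p (W m - W n) < e" by blast
qed

lemma pabs_null_comparison:
  assumes "\<And>n. pabs p (X n) \<le> g n" and "g \<longlonglongrightarrow> 0"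
  shows "(\<lambda>n. pabs p (X n)) \<longlonglongrightarrow> 0"
proof (rule Lim_null_comparison[OF _ assms(2)])
  show "\<forall>\<^sub>F n in sequentially. norm (pabs p (X n)) \<le> g n"
    by (intro always_eventually allI) (simp add: assms(1))
qed

section \<open>The completion \<open>Q_p\<close>\<close>

lemma equiv_prel:
  assumes p: "prime p"
  shows "equiv {X. pcauchy p X} (prel p)"
proof (rule equivI)
  show "refl_on {X. pcauchy p X} (prel p)"
    by (rule refl_onI) (auto simp: prel_def)
  show "prel p \<subseteq> {X. pcauchy p X} \<times> {X. pcauchy p X}"
    by (auto simp: prel_def)
  show "sym (prel p)"
    unfolding sym_def prel_def using pabs_minus_commute[OF p] by auto
  show "trans (prel p)"
    unfolding trans_def prel_def
  proof clarsimp
    fix X Y Z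
    assume XY: "(\<lambda>n. pabs p (X n - Y n)) \<longlonglongrightarrow> 0" and YZ: "(\<lambda>n. pabs p (Y n - Z n)) \<longlonglongrightarrow> 0"
    have "pabs p (X n - Z n) \<le> pabs p (X n - Y n) + pabs p (Y n - Z n)" for n
      using pabs_triangle[OF p, of "X n - Y n" "Y n - Z n"] by simp
    then show "(\<lambda>n. pabs p (X n - Z n)) \<longlonglongrightarrow> 0"
      by (rule pabs_null_comparison[OF _ tendsto_add_zero[OF XY YZ]])
  qed
qed

lemma Qp_prep:
  assumes p: "prime p" and x: "x \<in> Qp p"
  shows "pcauchy p (prep x)" and "pclass p (prep x) = x"
proof -
  obtain X where X: "pcauchy p X" "x = prel p `` {X}"
    using x unfolding Qp_def by (auto elim!: quotientE)
  then have "X \<in> x" by (simp add: prel_def)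
  then have "prep x \<in> x" unfolding prep_def by (metis someI)
  then have XP: "(X, prep x) \<in> prel p" using X by simp
  then show "pcauchy p (prep x)" by (simp add: prel_def)
  have "prel p `` {X} = prel p `` {prep x}" by (rule equiv_class_eq[OF equiv_prel[OF p] XP])
  then show "pclass p (prep x) = x" using X(2) by (simp add: pclass_def)
qed

lemma pclass_in_Qp: "pcauchy p X \<Longrightarrow> pclass p X \<in> Qp p"
  unfolding Qp_def pclass_def by (auto intro: quotientI)

lemma prel_prep_pclass:
  assumes X: "pcauchy p X"
  shows "(X, prep (pclass p X)) \<in> prel p"
proof -
  have "X \<in> pclass p X" using X by (simp add: pclass_def prel_def)
  then have "prep (pclass p X) \<in> pclass p X" unfolding prep_def by (metis someI)
  then show ?thesis by (simp add: pclass_def)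
qed

lemma pclass_eq_iff:
  assumes p: "prime p" and "pcauchy p X" "pcauchy p Y"
  shows "pclass p X = pclass p Y \<longleftrightarrow> (X, Y) \<in> prel p"
  unfolding pclass_def using eq_equiv_class_iff[OF equiv_prel[OF p]] assms by simp

lemma pclass_eq_if_close:
  assumes p: "prime p" and Y: "pcauchy p Y" and close: "(\<lambda>n. pabs p (W n - Y n)) \<longlonglongrightarrow> 0"
  shows "pclass p W = pclass p Y"
  using pclass_eq_iff[OF p pcauchy_if_close[OF p Y close] Y] pcauchy_if_close[OF p Y close] Y close
  by (simp add: prel_def)

lemma pnorm_pclass:
  assumes p: "prime p" and X: "pcauchy p X"
  shows "(\<lambda>n. pabs p (X n)) \<longlonglongrightarrow> pnorm p (pclass p X)"
proof -
  define P where "P = prep (pclass p X)"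
  obtain L where L: "(\<lambda>n. pabs p (X n)) \<longlonglongrightarrow> L"
    using pcauchy_pabs_convergent[OF p X] by (auto simp: convergent_def)
  have null: "(\<lambda>n. pabs p (X n - P n)) \<longlonglongrightarrow> 0"
    using prel_prep_pclass[OF X] by (simp add: prel_def P_def)
  have bound: "norm (pabs p (P n) - pabs p (X n)) \<le> pabs p (X n - P n)" for n
    using abs_pabs_diff_le[OF p, of "X n" "P n"] by simp
  have "(\<lambda>n. pabs p (P n) - pabs p (X n)) \<longlonglongrightarrow> 0"
    by (rule Lim_null_comparison[OF _ null]) (intro always_eventually allI bound)
  then have "(\<lambda>n. pabs p (P n)) \<longlonglongrightarrow> L"
    using tendsto_add[OF _ L] by fastforce
  then have "pnorm p (pclass p X) = L"
    unfolding pnorm_def P_def by (rule limI)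
  then show ?thesis using L by simp
qed

lemma pnorm_Qp:
  assumes p: "prime p" and x: "x \<in> Qp p"
  shows "(\<lambda>n. pabs p (prep x n)) \<longlonglongrightarrow> pnorm p x"
  using pnorm_pclass[OF p Qp_prep(1)[OF p x]] by (simp add: Qp_prep(2)[OF p x])

lemma pnorm_nonneg: "prime p \<Longrightarrow> x \<in> Qp p \<Longrightarrow> pnorm p x \<ge> 0"
  using pnorm_Qp LIMSEQ_le_const pabs_nonneg by metis

lemma pclass_eq_pzero_iff:
  assumes p: "prime p" and X: "pcauchy p X"
  shows "pclass p X = pzero p \<longleftrightarrow> (\<lambda>n. pabs p (X n)) \<longlonglongrightarrow> 0"
  unfolding pzero_def using pclass_eq_iff[OF p X pcauchy_const] X
  by (simp add: prel_def pcauchy_const)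

lemma pnorm_eq_0_iff:
  assumes p: "prime p" and x: "x \<in> Qp p"
  shows "pnorm p x = 0 \<longleftrightarrow> x = pzero p"
  using pclass_eq_pzero_iff[OF p Qp_prep(1)[OF p x]] pnorm_Qp[OF p x] LIMSEQ_unique
  by (metis Qp_prep(2)[OF p x])

lemma pzero_in_Qp: "pzero p \<in> Qp p"
  unfolding pzero_def by (rule pclass_in_Qp[OF pcauchy_const])

lemma pnorm_pzero: "prime p \<Longrightarrow> pnorm p (pzero p) = 0"
  using pnorm_eq_0_iff[OF _ pzero_in_Qp] by simp

lemma pmul_pof_rat:
  assumes p: "prime p" and x: "x \<in> Qp p"
  shows "pmul p (pof_rat p q) x = pclass p (\<lambda>n. q * prep x n)"
proof -
  define Z where "Z = prep (pof_rat p q)"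
  define X where "X = prep x"
  obtain B where B: "B > 0" "\<And>n. pabs p (X n) \<le> B"
    using pcauchy_pabs_bounded[OF p Qp_prep(1)[OF p x]] unfolding X_def by blast
  have "(\<lambda>n. pabs p (q - Z n)) \<longlonglongrightarrow> 0"
    using prel_prep_pclass[OF pcauchy_const[of p q]] by (simp add: prel_def pof_rat_def Z_def)
  then have "(\<lambda>n. B * pabs p (Z n - q)) \<longlonglongrightarrow> 0"
    using tendsto_mult_right_zero pabs_minus_commute[OF p] by simp
  moreover have "pabs p (Z n * X n - q * X n) \<le> B * pabs p (Z n - q)" for n
  proof -
    have "pabs p (Z n * X n - q * X n) = pabs p (Z n - q) * pabs p (X n)"
      by (simp add: pabs_mult[OF p, symmetric] left_diff_distrib)
    also have "\<dots> \<le> pabs p (Z n - q) * B"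
      by (rule mult_left_mono[OF B(2) pabs_nonneg])
    finally show ?thesis by (simp add: mult.commute)
  qed
  ultimately have "(\<lambda>n. pabs p (Z n * X n - q * X n)) \<longlonglongrightarrow> 0"
    by (intro pabs_null_comparison)
  then have "pclass p (\<lambda>n. Z n * X n) = pclass p (\<lambda>n. q * X n)"
    by (rule pclass_eq_if_close[OF p pcauchy_cmult[OF p Qp_prep(1)[OF p x]], folded X_def])
  then show ?thesis by (simp add: pmul_def Z_def X_def)
qed

lemma psub_pclass:
  assumes p: "prime p" and A: "pcauchy p A" and y: "y \<in> Qp p"
  shows "psub p (pclass p A) y = pclass p (\<lambda>n. A n - prep y n)"
proof -
  have "(\<lambda>n. pabs p (prep (pclass p A) n - A n)) \<longlonglongrightarrow> 0"
    using prel_prep_pclass[OF A] pabs_minus_commute[OF p] by (simp add: prel_def)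
  then have "pclass p (\<lambda>n. prep (pclass p A) n - prep y n) = pclass p (\<lambda>n. A n - prep y n)"
    by (intro pclass_eq_if_close[OF p] pcauchy_diff[OF p A] Qp_prep(1)[OF p y]) simp
  then show ?thesis by (simp add: psub_def)
qed

lemma pscale_in_Qp: "prime p \<Longrightarrow> x \<in> Qp p \<Longrightarrow> pmul p (pof_rat p q) x \<in> Qp p"
  by (simp add: pmul_pof_rat pclass_in_Qp pcauchy_cmult Qp_prep(1))

lemma psub_in_Qp: "prime p \<Longrightarrow> x \<in> Qp p \<Longrightarrow> y \<in> Qp p \<Longrightarrow> psub p x y \<in> Qp p"
  unfolding psub_def by (intro pclass_in_Qp pcauchy_diff Qp_prep(1))

lemma pnorm_pscale:
  assumes p: "prime p" and x: "x \<in> Qp p"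
  shows "pnorm p (pmul p (pof_rat p q) x) = pabs p q * pnorm p x"
proof -
  have "(\<lambda>n. pabs p (q * prep x n)) \<longlonglongrightarrow> pabs p q * pnorm p x"
    using tendsto_mult_left[OF pnorm_Qp[OF p x]] by (simp add: pabs_mult[OF p])
  then show ?thesis
    using pnorm_pclass[OF p pcauchy_cmult[OF p Qp_prep(1)[OF p x]]] LIMSEQ_unique
    by (metis pmul_pof_rat[OF p x])
qed

lemma pnorm_psub_le:
  assumes p: "prime p" and x: "x \<in> Qp p" and y: "y \<in> Qp p"
  shows "pnorm p (psub p x y) \<le> max (pnorm p x) (pnorm p y)"
proof (rule LIMSEQ_le)
  show "(\<lambda>n. pabs p (prep x n - prep y n)) \<longlonglongrightarrow> pnorm p (psub p x y)"
    unfolding psub_def by (intro pnorm_pclass[OF p] pcauchy_diff[OF p] Qp_prep(1)[OF p] x y)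
  show "(\<lambda>n. max (pabs p (prep x n)) (pabs p (prep y n))) \<longlonglongrightarrow> max (pnorm p x) (pnorm p y)"
    by (intro tendsto_max pnorm_Qp[OF p] x y)
  show "\<exists>N. \<forall>n\<ge>N. pabs p (prep x n - prep y n) \<le> max (pabs p (prep x n)) (pabs p (prep y n))"
    using pabs_add_le_max[OF p, of "prep x _" "- prep y _"] pabs_minus[OF p] by simp
qed

lemma pnorm_pzero_psub:
  assumes p: "prime p" and y: "y \<in> Qp p"
  shows "pnorm p (psub p (pzero p) y) = pnorm p y"
proof -
  have "(\<lambda>n. pabs p (0 - prep y n)) \<longlonglongrightarrow> pnorm p y"
    using pnorm_Qp[OF p y] by (simp add: pabs_minus[OF p])
  then show ?thesis
    using pnorm_pclass[OF p pcauchy_diff[OF p pcauchy_const Qp_prep(1)[OF p y]]] LIMSEQ_unique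
    by (metis pzero_def psub_pclass[OF p pcauchy_const y])
qed

lemma pscale_pzero: "prime p \<Longrightarrow> pmul p (pof_rat p q) (pzero p) = pzero p"
  using pnorm_eq_0_iff[OF _ pscale_in_Qp[OF _ pzero_in_Qp]] pnorm_pscale[OF _ pzero_in_Qp]
  by (simp add: pnorm_pzero)

lemma pscale_in_Zp: "prime p \<Longrightarrow> pabs p q \<le> 1 \<Longrightarrow> x \<in> Zp p \<Longrightarrow> pmul p (pof_rat p q) x \<in> Zp p"
  by (auto simp: Zp_def pscale_in_Qp pnorm_pscale pnorm_nonneg mult_le_one)

lemma psub_in_Zp: "prime p \<Longrightarrow> x \<in> Zp p \<Longrightarrow> y \<in> Zp p \<Longrightarrow> psub p x y \<in> Zp p"
  using pnorm_psub_le[of p x y] by (auto simp: Zp_def psub_in_Qp)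

section \<open>Strong approximation in \<open>\<rat>\<close>\<close>

lemma pabs_of_int_divide_le_1:
  assumes p: "prime p" and b: "b \<noteq> 0" and le: "multiplicity (int p) b \<le> multiplicity (int p) a"
  shows "pabs p (of_int a / of_int b) \<le> 1"
proof (cases "a = 0")
  case False
  have "real p powr (real (multiplicity (int p) b) - real (multiplicity (int p) a)) \<le> real p powr 0"
    using le prime_gt_1_nat[OF p] by (intro powr_mono) auto
  then show ?thesis
    using p prime_gt_0_nat[OF p] by (simp add: pabs_of_int_divide[OF p False b])
qed simp

lemma pabs_of_int_divide_le_powr:
  assumes p: "prime p" and b: "b \<noteq> 0" and dvd: "int p ^ N dvd a"
  shows "pabs p (of_int a / of_int b) \<le> real p powr (real (multiplicity (int p) b) - real N)"
proof (cases "a = 0")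
  case False
  have "N \<le> multiplicity (int p) a"
    using multiplicity_geI[OF False _ dvd] p prime_elem_not_unit[of "int p"] by simp
  then show ?thesis
    using prime_gt_1_nat[OF p] by (simp add: pabs_of_int_divide[OF p False b] powr_mono)
qed simp

lemma finite_pabs_gt_1: "finite {p. prime p \<and> pabs p q > 1}"
proof -
  obtain a b where b: "b > 0" and q: "q = of_int a / of_int b" by (rule rat_as_int_fraction)
  have "{p. prime p \<and> pabs p q > 1} \<subseteq> {p. p dvd nat b}"
  proof clarify
    fix p assume p: "prime p" and gt: "pabs p q > 1"
    show "p dvd nat b"
    proof (rule ccontr)
      assume "\<not> p dvd nat b"
      then have "\<not> int p dvd b"
        using b int_dvd_int_iff[of p "nat b"] by simp
      then have "multiplicity (int p) b = 0"
        using b p by (simp add: prime_elem_multiplicity_eq_zero_iff)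
      then show False
        using gt pabs_of_int_divide_le_1[OF p, of b a] b q by simp
    qed
  qed
  then show ?thesis by (rule finite_subset) (simp add: b)
qed

lemma common_denominator:
  fixes t :: "'a \<Rightarrow> rat"
  assumes S: "finite S"
  obtains d :: int and c :: "'a \<Rightarrow> int" where "d > 0" "\<And>p. p \<in> S \<Longrightarrow> t p = of_int (c p) / of_int d"
proof
  define den where "den p = snd (quotient_of (t p))" for p
  define num where "num p = fst (quotient_of (t p))" for p
  have den: "den p > 0" and t: "t p = of_int (num p) / of_int (den p)" for p
    unfolding den_def num_def by (simp add: quotient_of_denom_pos') (metis prod.collapse quotient_of_div)
  show D: "(\<Prod>p\<in>S. den p) > 0" using den by (simp add: prod_pos)
  fix p assume "p \<in> S"
  then obtain e where e: "(\<Prod>p\<in>S. den p) = den p * e" using S by (meson dvd_prodI dvdE)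
  then have "e \<noteq> 0" using D by auto
  then show "t p = of_int ((\<Prod>p\<in>S. den p) div den p * num p) / of_int (\<Prod>p\<in>S. den p)"
    unfolding e using den[of p] t[of p] by (simp add: field_simps)
qed

lemma int_split_coprime_part:
  assumes S: "finite S" "\<forall>p\<in>S. prime p" and d: "(d :: int) > 0"
  obtains u w where "d = u * w" "u > 0" "w > 0" "\<forall>p\<in>S. \<not> int p dvd w"
    "\<forall>l. prime l \<and> l \<notin> S \<longrightarrow> \<not> int l dvd u"
proof -
  have "\<exists>u w. d = u * w \<and> u > 0 \<and> w > 0 \<and> (\<forall>p\<in>S. \<not> int p dvd w) \<and>
      (\<forall>l. prime l \<and> l \<notin> S \<longrightarrow> \<not> int l dvd u)"
    using S
  proof (induction S rule: finite_induct)
    case empty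
    show ?case by (rule exI[of _ 1], rule exI[of _ d]) (use d in auto)
  next
    case (insert p S)
    then obtain u w where uw: "d = u * w" "u > 0" "w > 0" "\<forall>p\<in>S. \<not> int p dvd w"
      "\<forall>l. prime l \<and> l \<notin> S \<longrightarrow> \<not> int l dvd u"
      by auto
    have p: "prime p" using insert.prems by simp
    define k where "k = multiplicity (int p) w"
    obtain w' where w': "w = int p ^ k * w'" "\<not> int p dvd w'"
      using multiplicity_decompose'[of w "int p"] uw(3) p prime_elem_not_unit[of "int p"]
      unfolding k_def by auto
    have pk: "int p ^ k > 0" using prime_gt_0_nat[OF p] by simp
    show ?case
    proof (intro exI conjI)
      show "d = (u * int p ^ k) * w'" using uw(1) w'(1) by (simp add: mult.assoc)
      show "u * int p ^ k > 0" using uw(2) pk by simp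
      show "w' > 0" using uw(3) w'(1) pk by (metis zero_less_mult_pos)
      show "\<forall>q\<in>insert p S. \<not> int q dvd w'"
        using uw(4) w' by (auto dest: dvd_mult_right[of _ _ "int p ^ k", unfolded mult.commute[of _ w']])
      show "\<forall>l. prime l \<and> l \<notin> insert p S \<longrightarrow> \<not> int l dvd u * int p ^ k"
      proof (intro allI impI notI)
        fix l assume l: "prime l \<and> l \<notin> insert p S" and dvd: "int l dvd u * int p ^ k"
        then have "int l dvd int p ^ k"
          using uw(5) prime_dvd_mult_iff[of "int l" u] by auto
        then have "int l dvd int p" using prime_dvd_power[of "int l" "int p" k] l by auto
        then have "l dvd p" by simp
        then show False using l p primes_dvd_imp_eq by auto
      qed
    qed
  qed
  then show ?thesis using that by blast
qed

lemma int_cong_prime_powers_multiple: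
  assumes S: "finite S" "\<forall>p\<in>S. prime p" and w: "w > 0" "\<forall>p\<in>S. \<not> int p dvd w"
  obtains m :: int where "m > 0" "w dvd m" "\<And>p. p \<in> S \<Longrightarrow> int p ^ N dvd m - c p"
proof -
  have "\<forall>p\<in>S. \<forall>p'\<in>S. p \<noteq> p' \<longrightarrow> coprime (p ^ N) (p' ^ N)"
    using S(2) by (simp add: primes_coprime)
  then obtain x where x: "\<forall>p\<in>S. [x = nat (c p mod int (p ^ N))] (mod p ^ N)"
    using chinese_remainder_nat[OF S(1), of "\<lambda>p. p ^ N" "\<lambda>p. nat (c p mod int (p ^ N))"]
    by blast
  have x_int: "[int x = c p] (mod int p ^ N)" if "p \<in> S" for p
  proof -
    have "p > 0" using S(2) that prime_gt_0_nat by blast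
    then have "[int x = c p mod int p ^ N] (mod int p ^ N)"
      using x that cong_int_iff[of x "nat (c p mod int (p ^ N))" "p ^ N"] by simp
    then show ?thesis by simp
  qed
  define P where "P = (\<Prod>p\<in>S. int p ^ N)"
  have P: "P > 0" unfolding P_def using S(2) prime_gt_0_nat by (auto intro!: prod_pos)
  have "coprime (int p) w" if "p \<in> S" for p
    using S(2) w(2) that by (intro prime_imp_coprime) auto
  then have "coprime P w"
    unfolding P_def by (intro prod_coprime_left) simp
  then obtain y where y: "[y = int x] (mod P)" "[y = 0] (mod w)"
    using binary_chinese_remainder_int[of P w "int x" 0] by blast
  define K where "K = \<bar>y\<bar> + 1"
  define m where "m = y + K * (P * w)"
  show ?thesis
  proof
    have "K * 1 \<le> K * (P * w)"
      using P w(1) by (intro mult_left_mono) (auto simp: K_def int_one_le_iff_zero_less)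
    moreover have "- y < K" unfolding K_def by simp
    ultimately show "m > 0" unfolding m_def by linarith
    show "w dvd m" unfolding m_def using y(2) by (simp add: cong_0_iff)
    fix p assume pS: "p \<in> S"
    have dvd_P: "int p ^ N dvd P" unfolding P_def using S(1) pS by (rule dvd_prodI)
    have eq: "m - c p = (y - int x) + (int x - c p) + K * w * P"
      unfolding m_def by (simp add: algebra_simps)
    have "int p ^ N dvd y - int x"
      using dvd_P y(1) by (simp add: cong_iff_dvd_diff dvd_trans)
    moreover have "int p ^ N dvd int x - c p"
      using x_int[OF pS] by (simp add: cong_iff_dvd_diff)
    ultimately show "int p ^ N dvd m - c p"
      unfolding eq by (intro dvd_add dvd_mult dvd_P)
  qed
qed

lemma exists_exponent_powr_less:
  assumes S: "finite S" "\<forall>p\<in>S. prime p" and \<delta>: "\<forall>p\<in>S. \<delta> p > 0"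
  obtains N :: nat where "\<And>p. p \<in> S \<Longrightarrow> real p powr (k p - real N) < \<delta> p"
proof -
  have ev: "\<forall>\<^sub>F N in sequentially. real p powr (k p - real N) < \<delta> p" if pS: "p \<in> S" for p
  proof -
    have p1: "real p > 1" using S(2) pS prime_gt_1_nat by auto
    have "(\<lambda>N. real p powr k p * inverse (real p ^ N)) \<longlonglongrightarrow> 0"
      by (intro tendsto_mult_right_zero LIMSEQ_inverse_realpow_zero p1)
    moreover have "real p powr (k p - real N) = real p powr k p * inverse (real p ^ N)" for N
      using p1 by (simp add: powr_diff powr_realpow divide_inverse)
    ultimately have "(\<lambda>N. real p powr (k p - real N)) \<longlonglongrightarrow> 0"
      by simp
    then show ?thesis
      by (rule order_tendstoD(2)) (use \<delta> pS in blast)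
  qed
  have "\<forall>\<^sub>F N in sequentially. \<forall>p\<in>S. real p powr (k p - real N) < \<delta> p"
    by (rule eventually_ball_finite[OF S(1)]) (use ev in blast)
  then obtain N0 where "\<forall>N\<ge>N0. \<forall>p\<in>S. real p powr (k p - real N) < \<delta> p"
    unfolding eventually_sequentially by blast
  then show ?thesis using that[of N0] by blast
qed

lemma rat_strong_approximation:
  assumes S: "finite S" "\<forall>p\<in>S. prime p" and \<delta>: "\<forall>p\<in>S. \<delta> p > 0"
  obtains q :: rat where "q > 0" "\<And>p. p \<in> S \<Longrightarrow> pabs p (q - t p) < \<delta> p"
    "\<And>l. prime l \<Longrightarrow> l \<notin> S \<Longrightarrow> pabs l q \<le> 1"
proof -
  \<comment> \<open>\<open>q = m / d\<close> where \<open>t p = c p / d\<close>, \<open>m \<equiv> c p (mod p^N)\<close> on \<open>S\<close>, and the part of \<open>d\<close>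
    prime to \<open>S\<close> divides \<open>m\<close>, so that \<open>q\<close> is integral outside \<open>S\<close>.\<close>
  obtain d c where d: "d > 0" and t: "\<And>p. p \<in> S \<Longrightarrow> t p = of_int (c p) / of_int d"
    using common_denominator[OF S(1), of t] by blast
  obtain u w where uw: "d = u * w" "u > 0" "w > 0" "\<forall>p\<in>S. \<not> int p dvd w"
    "\<forall>l. prime l \<and> l \<notin> S \<longrightarrow> \<not> int l dvd u"
    using int_split_coprime_part[OF S d] by blast
  obtain N where N: "\<And>p. p \<in> S \<Longrightarrow> real p powr (real (multiplicity (int p) d) - real N) < \<delta> p"
    using exists_exponent_powr_less[OF S \<delta>, of "\<lambda>p. real (multiplicity (int p) d)"] by blast
  obtain m where m: "m > 0" "w dvd m" "\<And>p. p \<in> S \<Longrightarrow> int p ^ N dvd m - c p"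
    using int_cong_prime_powers_multiple[OF S uw(3,4), of N c] by blast
  show ?thesis
  proof
    show "of_int m / of_int d > (0 :: rat)" using m(1) d by simp
  next
    fix p assume pS: "p \<in> S"
    have p: "prime p" using S(2) pS by simp
    have "pabs p (of_int m / of_int d - t p) = pabs p (of_int (m - c p) / of_int d)"
      using t[OF pS] d by (simp add: diff_divide_distrib)
    also have "\<dots> \<le> real p powr (real (multiplicity (int p) d) - real N)"
      using d m(3)[OF pS] by (intro pabs_of_int_divide_le_powr[OF p]) auto
    also have "\<dots> < \<delta> p" by (rule N[OF pS])
    finally show "pabs p (of_int m / of_int d - t p) < \<delta> p" .
  next
    fix l assume l: "prime l" "l \<notin> S"
    have "multiplicity (int l) u = 0"
      using uw(2,5) l by (simp add: prime_elem_multiplicity_eq_zero_iff)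
    then have "multiplicity (int l) d = multiplicity (int l) w"
      using uw(1-3) l by (simp add: prime_elem_multiplicity_mult_distrib)
    also have "\<dots> \<le> multiplicity (int l) m"
      using m(1,2) by (intro dvd_imp_multiplicity_le) auto
    finally show "pabs l (of_int m / of_int d) \<le> 1"
      using d by (intro pabs_of_int_divide_le_1[OF l(1)]) auto
  qed
qed

lemma pcauchy_cmult_diff_approx:
  assumes p: "prime p" and X: "pcauchy p X" and Y: "pcauchy p Y"
    and lim: "(\<lambda>n. pabs p (X n)) \<longlonglongrightarrow> \<alpha>" and \<alpha>: "\<alpha> > 0" and e: "e > 0"
  obtains \<delta> t where "\<delta> > 0"
    "\<And>q. pabs p (q - t) < \<delta> \<Longrightarrow> \<forall>\<^sub>F n in sequentially. pabs p (q * X n - Y n) < e"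
proof -
  obtain BX where BX: "BX > 0" "\<And>n. pabs p (X n) \<le> BX"
    using pcauchy_pabs_bounded[OF p X] by blast
  obtain BY where BY: "BY > 0" "\<And>n. pabs p (Y n) \<le> BY"
    using pcauchy_pabs_bounded[OF p Y] by blast
  define M where "M = BY / (\<alpha> / 2)"
  have M: "M > 0" using BY(1) \<alpha> by (simp add: M_def)
  obtain N1 where N1: "\<forall>n\<ge>N1. pabs p (X n) > \<alpha> / 2"
    using order_tendstoD(1)[OF lim, of "\<alpha> / 2"] \<alpha> by (auto simp: eventually_sequentially)
  have "e / M > 0" using e M by simp
  then obtain N2 where N2: "\<forall>m\<ge>N2. \<forall>n\<ge>N2. pabs p (X m - X n) < e / M"
    using X unfolding pcauchy_def by blast
  obtain N3 where N3: "\<forall>m\<ge>N3. \<forall>n\<ge>N3. pabs p (Y m - Y n) < e"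
    using Y e unfolding pcauchy_def by blast
  define n0 where "n0 = max N1 (max N2 N3)"
  \<comment> \<open>A rational approximation of \<open>y / x\<close>, bounded because \<open>|X n0| > \<alpha> / 2\<close>.\<close>
  define t where "t = Y n0 / X n0"
  have X0: "pabs p (X n0) > \<alpha> / 2" using N1 by (simp add: n0_def)
  then have "X n0 \<noteq> 0" using \<alpha> by auto
  have t: "pabs p t \<le> M"
    unfolding t_def pabs_divide[OF p] M_def using X0 BY \<alpha> by (intro frac_le) auto
  show ?thesis
  proof
    show "e / BX > 0" using e BX(1) by simp
    fix q assume q: "pabs p (q - t) < e / BX"
    have "pabs p (q * X n - Y n) < e" if n: "n \<ge> n0" for n
    proof -
      have eq: "q * X n - Y n = ((q - t) * X n + t * (X n - X n0)) + (Y n0 - Y n)"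
        using \<open>X n0 \<noteq> 0\<close> by (simp add: t_def field_simps)
      have "pabs p ((q - t) * X n) \<le> pabs p (q - t) * BX"
        unfolding pabs_mult[OF p] by (rule mult_left_mono[OF BX(2) pabs_nonneg])
      also have "\<dots> < e / BX * BX" using q BX(1) by (rule mult_strict_right_mono)
      finally have A: "pabs p ((q - t) * X n) < e" using BX(1) by simp
      have "pabs p (t * (X n - X n0)) \<le> M * pabs p (X n - X n0)"
        unfolding pabs_mult[OF p] by (rule mult_right_mono[OF t pabs_nonneg])
      also have "\<dots> < M * (e / M)" using N2 n M by (intro mult_strict_left_mono) (auto simp: n0_def)
      finally have B: "pabs p (t * (X n - X n0)) < e" using M by simp
      have C: "pabs p (Y n0 - Y n) < e" using N3 n by (simp add: n0_def)
      show ?thesis unfolding eq by (intro pabs_add_less[OF p] A B C)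
    qed
    then show "\<forall>\<^sub>F n in sequentially. pabs p (q * X n - Y n) < e"
      unfolding eventually_sequentially by blast
  qed
qed

lemma pscale_sub_approx:
  assumes p: "prime p" and x: "x \<in> Qp p" and y: "y \<in> Qp p"
    and zero: "x = pzero p \<longrightarrow> y = pzero p" and e: "e > 0"
  shows "\<exists>t \<delta>. \<delta> > 0 \<and>
    (\<forall>q. pabs p (q - t) < \<delta> \<longrightarrow> pnorm p (psub p (pmul p (pof_rat p q) x) y) < e)"
proof (cases "x = pzero p")
  case True
  have "pnorm p (psub p (pmul p (pof_rat p q) x) y) = 0" for q
    using True zero by (simp add: pscale_pzero pnorm_pzero_psub pnorm_pzero pzero_in_Qp p)
  then show ?thesis using e by (intro exI[of _ 0] exI[of _ 1]) simp
next
  case False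
  define X where "X = prep x"
  define Y where "Y = prep y"
  have X: "pcauchy p X" and Y: "pcauchy p Y"
    unfolding X_def Y_def using Qp_prep(1)[OF p] x y by auto
  have "pnorm p x > 0"
    using False pnorm_nonneg[OF p x] pnorm_eq_0_iff[OF p x] by linarith
  moreover have "e / 2 > 0" using e by simp
  ultimately obtain \<delta> t where \<delta>: "\<delta> > 0"
    and approx: "\<And>q. pabs p (q - t) < \<delta> \<Longrightarrow> \<forall>\<^sub>F n in sequentially. pabs p (q * X n - Y n) < e / 2"
    using pcauchy_cmult_diff_approx[OF p X Y pnorm_Qp[OF p x, folded X_def]] by blast
  have "pnorm p (psub p (pmul p (pof_rat p q) x) y) < e" if q: "pabs p (q - t) < \<delta>" for q
  proof -
    have Z: "pcauchy p (\<lambda>n. q * X n - Y n)" by (intro pcauchy_diff[OF p] pcauchy_cmult[OF p] X Y)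
    have "psub p (pmul p (pof_rat p q) x) y = pclass p (\<lambda>n. q * X n - Y n)"
      unfolding pmul_pof_rat[OF p x] Y_def X_def by (intro psub_pclass[OF p] pcauchy_cmult[OF p] y X[unfolded X_def])
    moreover have "pnorm p (pclass p (\<lambda>n. q * X n - Y n)) \<le> e / 2"
    proof (rule tendsto_upperbound[OF pnorm_pclass[OF p Z]])
      show "\<forall>\<^sub>F n in sequentially. pabs p (q * X n - Y n) \<le> e / 2"
        using approx[OF q] by (rule eventually_mono) simp
    qed simp
    ultimately show ?thesis using e by simp
  qed
  then show ?thesis using \<delta> by blast
qed

section \<open>The finite adeles\<close>

lemma finite_adeles_Qp: "a \<in> finite_adeles \<Longrightarrow> prime p \<Longrightarrow> a p \<in> Qp p"
  by (simp add: finite_adeles_def)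

lemma adele_scale_in_finite_adeles:
  assumes a: "a \<in> finite_adeles"
  shows "adele_scale q a \<in> finite_adeles"
proof -
  have "adele_scale q a p \<in> Zp p" if "prime p" "a p \<in> Zp p" "pabs p q \<le> 1" for p
    using pscale_in_Zp[OF that(1,3,2)] that(1) by (simp add: adele_scale_def)
  then have "{p. prime p \<and> adele_scale q a p \<notin> Zp p} \<subseteq>
      {p. prime p \<and> a p \<notin> Zp p} \<union> {p. prime p \<and> pabs p q > 1}"
    by fastforce
  then have "finite {p. prime p \<and> adele_scale q a p \<notin> Zp p}"
    by (rule finite_subset) (use a finite_pabs_gt_1 in \<open>simp add: finite_adeles_def\<close>)
  then show ?thesis
    using a by (simp add: finite_adeles_def adele_scale_def pscale_in_Qp)
qed

lemma adele_sub_in_finite_adeles: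
  assumes a: "a \<in> finite_adeles" and b: "b \<in> finite_adeles"
  shows "adele_sub a b \<in> finite_adeles"
proof -
  have "adele_sub a b p \<in> Zp p" if "prime p" "a p \<in> Zp p" "b p \<in> Zp p" for p
    using psub_in_Zp[OF that] that(1) by (simp add: adele_sub_def)
  then have "{p. prime p \<and> adele_sub a b p \<notin> Zp p} \<subseteq>
      {p. prime p \<and> a p \<notin> Zp p} \<union> {p. prime p \<and> b p \<notin> Zp p}"
    by fastforce
  then have "finite {p. prime p \<and> adele_sub a b p \<notin> Zp p}"
    by (rule finite_subset) (use a b in \<open>simp add: finite_adeles_def\<close>)
  then show ?thesis
    using a b by (simp add: finite_adeles_def adele_sub_def psub_in_Qp)
qed

lemma pnhd0_Zp: "pnhd0 p (Zp p)"
  unfolding pnhd0_def Zp_def by (intro exI[of _ 1]) auto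

lemma pnhd0_Int:
  assumes "pnhd0 p A" "pnhd0 p B"
  shows "pnhd0 p (A \<inter> B)"
proof -
  obtain e1 e2 where "e1 > 0" "{x \<in> Qp p. pnorm p x < e1} \<subseteq> A" "e2 > 0" "{x \<in> Qp p. pnorm p x < e2} \<subseteq> B"
    using assms unfolding pnhd0_def by blast
  then show ?thesis
    unfolding pnhd0_def by (intro exI[of _ "min e1 e2"]) auto
qed

lemma adele_nhd0_Int:
  assumes "adele_nhd0 U1" "adele_nhd0 U2"
  shows "adele_nhd0 (U1 \<inter> U2)"
proof -
  obtain F1 V1 where F1: "finite F1" "\<forall>p\<in>F1. prime p \<and> pnhd0 p (V1 p)"
    and U1: "U1 = {x \<in> finite_adeles. \<forall>p. prime p \<longrightarrow> x p \<in> (if p \<in> F1 then V1 p else Zp p)}"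
    using assms(1) unfolding adele_nhd0_def by blast
  obtain F2 V2 where F2: "finite F2" "\<forall>p\<in>F2. prime p \<and> pnhd0 p (V2 p)"
    and U2: "U2 = {x \<in> finite_adeles. \<forall>p. prime p \<longrightarrow> x p \<in> (if p \<in> F2 then V2 p else Zp p)}"
    using assms(2) unfolding adele_nhd0_def by blast
  define V where "V p = (if p \<in> F1 then V1 p else Zp p) \<inter> (if p \<in> F2 then V2 p else Zp p)" for p
  have V: "(if p \<in> F1 \<union> F2 then V p else Zp p) =
      (if p \<in> F1 then V1 p else Zp p) \<inter> (if p \<in> F2 then V2 p else Zp p)" for p
    by (simp add: V_def)
  have "\<forall>p\<in>F1 \<union> F2. prime p \<and> pnhd0 p (V p)"
    unfolding V_def using F1(2) F2(2) by (auto intro!: pnhd0_Int simp: pnhd0_Zp)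
  moreover have "U1 \<inter> U2 = {x \<in> finite_adeles. \<forall>p. prime p \<longrightarrow> x p \<in> (if p \<in> F1 \<union> F2 then V p else Zp p)}"
    unfolding U1 U2 V by blast
  ultimately show ?thesis
    unfolding adele_nhd0_def using F1(1) F2(1) by blast
qed

definition adele_open :: "(nat \<Rightarrow> padic) set \<Rightarrow> bool" where
  "adele_open W \<longleftrightarrow> W \<subseteq> finite_adeles \<and>
    (\<forall>x\<in>W. \<exists>U. adele_nhd0 U \<and> {y \<in> finite_adeles. adele_sub y x \<in> U} \<subseteq> W)"

lemma adele_open_Int:
  assumes S: "adele_open S" and T: "adele_open T"
  shows "adele_open (S \<inter> T)"
  unfolding adele_open_def
proof (intro conjI ballI)
  show "S \<inter> T \<subseteq> finite_adeles" using S by (auto simp: adele_open_def)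
  fix x assume "x \<in> S \<inter> T"
  then obtain U1 U2 where U1: "adele_nhd0 U1" "{y \<in> finite_adeles. adele_sub y x \<in> U1} \<subseteq> S"
    and U2: "adele_nhd0 U2" "{y \<in> finite_adeles. adele_sub y x \<in> U2} \<subseteq> T"
    using S T unfolding adele_open_def by blast
  have "{y \<in> finite_adeles. adele_sub y x \<in> U1 \<inter> U2} \<subseteq> S \<inter> T"
    using U1(2) U2(2) by blast
  with adele_nhd0_Int[OF U1(1) U2(1)]
  show "\<exists>U. adele_nhd0 U \<and> {y \<in> finite_adeles. adele_sub y x \<in> U} \<subseteq> S \<inter> T"
    by blast
qed

lemma adele_open_Union: "\<forall>W\<in>\<K>. adele_open W \<Longrightarrow> adele_open (\<Union>\<K>)"
  unfolding adele_open_def by (meson UnionE UnionI Union_least subsetI subset_iff)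

lemma openin_adele_topology: "openin adele_topology = adele_open"
proof -
  have "istopology adele_open"
    unfolding istopology_def using adele_open_Int adele_open_Union by blast
  then show ?thesis
    unfolding adele_topology_def adele_open_def[abs_def] by (rule topology_inverse')
qed

lemma topspace_adele_topology: "topspace adele_topology = finite_adeles"
proof
  show "topspace adele_topology \<subseteq> finite_adeles"
    unfolding topspace_def openin_adele_topology adele_open_def by blast
  have "adele_nhd0 {x \<in> finite_adeles. \<forall>p. prime p \<longrightarrow> x p \<in> Zp p}"
    unfolding adele_nhd0_def by (intro exI[of _ "{}"] exI[of _ Zp]) simp
  then have "openin adele_topology finite_adeles"
    unfolding openin_adele_topology adele_open_def by blast
  then show "finite_adeles \<subseteq> topspace adele_topology" by (rule openin_subset)
qed

lemma adele_nhd0_box: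
  assumes "adele_nhd0 U"
  obtains F e where "finite F" "\<forall>p\<in>F. prime p \<and> e p > 0"
    "\<And>z. z \<in> finite_adeles \<Longrightarrow> \<forall>p\<in>F. pnorm p (z p) < e p \<Longrightarrow>
      \<forall>p. prime p \<and> p \<notin> F \<longrightarrow> z p \<in> Zp p \<Longrightarrow> z \<in> U"
proof -
  obtain F V where F: "finite F" "\<forall>p\<in>F. prime p \<and> pnhd0 p (V p)"
    and U: "U = {x \<in> finite_adeles. \<forall>p. prime p \<longrightarrow> x p \<in> (if p \<in> F then V p else Zp p)}"
    using assms unfolding adele_nhd0_def by blast
  have "\<forall>p\<in>F. \<exists>e>0. {z \<in> Qp p. pnorm p z < e} \<subseteq> V p"
    using F(2) unfolding pnhd0_def by blast
  then obtain e where e: "\<forall>p\<in>F. e p > 0 \<and> {z \<in> Qp p. pnorm p z < e p} \<subseteq> V p"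
    using bchoice[of F "\<lambda>p e. e > 0 \<and> {z \<in> Qp p. pnorm p z < e} \<subseteq> V p"] by blast
  show ?thesis
  proof (rule that[of F e, OF F(1)])
    show "\<forall>p\<in>F. prime p \<and> e p > 0" using F(2) e by blast
  next
    fix z assume z: "z \<in> finite_adeles" "\<forall>p\<in>F. pnorm p (z p) < e p"
      "\<forall>p. prime p \<and> p \<notin> F \<longrightarrow> z p \<in> Zp p"
    have "z p \<in> (if p \<in> F then V p else Zp p)" if p: "prime p" for p
    proof (cases "p \<in> F")
      case True
      then have "z p \<in> {z \<in> Qp p. pnorm p z < e p}"
        using z(2) finite_adeles_Qp[OF z(1) p] by simp
      then show ?thesis using e True by auto
    next
      case False
      then show ?thesis using z(3) p by simp
    qed
    then show "z \<in> U" unfolding U using z(1) by blast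
  qed
qed

lemma openin_adele_coordinate_nonzero:
  assumes p: "prime p"
  shows "openin adele_topology {y \<in> finite_adeles. y p \<noteq> pzero p}"
  unfolding openin_adele_topology adele_open_def
proof (intro conjI ballI)
  fix y assume y: "y \<in> {y \<in> finite_adeles. y p \<noteq> pzero p}"
  then have yp: "y p \<in> Qp p" using finite_adeles_Qp[OF _ p] by blast
  define \<rho> where "\<rho> = pnorm p (y p)"
  have \<rho>: "\<rho> > 0"
    using y pnorm_nonneg[OF p yp] pnorm_eq_0_iff[OF p yp] unfolding \<rho>_def by auto
  define U where "U = {x \<in> finite_adeles. \<forall>p'. prime p' \<longrightarrow>
      x p' \<in> (if p' \<in> {p} then {z \<in> Qp p. pnorm p z < \<rho>} else Zp p')}"
  have "pnhd0 p {z \<in> Qp p. pnorm p z < \<rho>}"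
    unfolding pnhd0_def using \<rho> by blast
  then have "adele_nhd0 U"
    unfolding adele_nhd0_def U_def using p
    by (intro exI[of _ "{p}"] exI[of _ "\<lambda>_. {z \<in> Qp p. pnorm p z < \<rho>}"]) simp
  moreover have "{w \<in> finite_adeles. adele_sub w y \<in> U} \<subseteq> {y \<in> finite_adeles. y p \<noteq> pzero p}"
  proof (intro subsetI CollectI conjI notI)
    fix w assume "w \<in> {w \<in> finite_adeles. adele_sub w y \<in> U}"
    then show "w \<in> finite_adeles" by blast
  next
    fix w assume "w \<in> {w \<in> finite_adeles. adele_sub w y \<in> U}" and wp: "w p = pzero p"
    then have w: "adele_sub w y \<in> U" "w p = pzero p" by auto
    then have "\<forall>p'. prime p' \<longrightarrow>
        adele_sub w y p' \<in> (if p' \<in> {p} then {z \<in> Qp p. pnorm p z < \<rho>} else Zp p')"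
      unfolding U_def by blast
    then have "adele_sub w y p \<in> (if p \<in> {p} then {z \<in> Qp p. pnorm p z < \<rho>} else Zp p)"
      using p by blast
    then have "pnorm p (psub p (pzero p) (y p)) < \<rho>"
      using p w(2) by (simp add: adele_sub_def)
    then show False using pnorm_pzero_psub[OF p yp] by (simp add: \<rho>_def)
  qed
  ultimately show "\<exists>U. adele_nhd0 U \<and> {w \<in> finite_adeles. adele_sub w y \<in> U} \<subseteq> {y \<in> finite_adeles. y p \<noteq> pzero p}"
    by blast
qed auto

lemma closure_orbit_zero_coordinate:
  assumes b: "b \<in> adele_topology closure_of {adele_scale q a | q :: rat. q > 0}"
    and p: "prime p" and ap: "a p = pzero p"
  shows "b p = pzero p"
proof (rule ccontr)
  let ?T = "{y \<in> finite_adeles. y p \<noteq> pzero p}"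
  assume "b p \<noteq> pzero p"
  have bA: "b \<in> finite_adeles" and meets: "\<forall>T. b \<in> T \<and> openin adele_topology T \<longrightarrow>
      (\<exists>y. y \<in> {adele_scale q a | q :: rat. q > 0} \<and> y \<in> T)"
    using b unfolding in_closure_of topspace_adele_topology by auto
  have "\<exists>y. y \<in> {adele_scale q a | q :: rat. q > 0} \<and> y \<in> ?T"
    by (rule meets[rule_format])
      (use bA \<open>b p \<noteq> pzero p\<close> openin_adele_coordinate_nonzero[OF p] in simp)
  then obtain q :: rat where "adele_scale q a p \<noteq> pzero p" by blast
  then show False
    using ap p by (simp add: adele_scale_def pscale_pzero)
qed

lemma rat_scale_approx:
  assumes a: "a \<in> finite_adeles" and b: "b \<in> finite_adeles"
    and zero: "\<forall>p. prime p \<longrightarrow> a p = pzero p \<longrightarrow> b p = pzero p"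
    and S: "finite S" "\<forall>p\<in>S. prime p" and \<epsilon>: "\<forall>p\<in>S. \<epsilon> p > 0"
    and integral: "\<forall>p. prime p \<and> p \<notin> S \<longrightarrow> a p \<in> Zp p \<and> b p \<in> Zp p"
  obtains q :: rat where "q > 0"
    "\<And>p. p \<in> S \<Longrightarrow> pnorm p (psub p (pmul p (pof_rat p q) (a p)) (b p)) < \<epsilon> p"
    "\<And>p. prime p \<Longrightarrow> p \<notin> S \<Longrightarrow> psub p (pmul p (pof_rat p q) (a p)) (b p) \<in> Zp p"
proof -
  have ex_t: "\<forall>p\<in>S. \<exists>t \<delta>. \<delta> > 0 \<and>
      (\<forall>q. pabs p (q - t) < \<delta> \<longrightarrow> pnorm p (psub p (pmul p (pof_rat p q) (a p)) (b p)) < \<epsilon> p)"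
  proof
    fix p assume pS: "p \<in> S"
    then have p: "prime p" using S(2) by blast
    have "a p = pzero p \<longrightarrow> b p = pzero p" using zero p by blast
    then show "\<exists>t \<delta>. \<delta> > 0 \<and>
        (\<forall>q. pabs p (q - t) < \<delta> \<longrightarrow> pnorm p (psub p (pmul p (pof_rat p q) (a p)) (b p)) < \<epsilon> p)"
      using pscale_sub_approx[OF p finite_adeles_Qp[OF a p] finite_adeles_Qp[OF b p]] \<epsilon> pS by blast
  qed
  obtain t where ex_\<delta>: "\<forall>p\<in>S. \<exists>\<delta>. \<delta> > 0 \<and>
      (\<forall>q. pabs p (q - t p) < \<delta> \<longrightarrow> pnorm p (psub p (pmul p (pof_rat p q) (a p)) (b p)) < \<epsilon> p)"
    using bchoice[OF ex_t] by blast
  obtain \<delta> where \<delta>: "\<forall>p\<in>S. \<delta> p > 0 \<and>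
      (\<forall>q. pabs p (q - t p) < \<delta> p \<longrightarrow> pnorm p (psub p (pmul p (pof_rat p q) (a p)) (b p)) < \<epsilon> p)"
    using bchoice[OF ex_\<delta>] by blast
  have "\<forall>p\<in>S. \<delta> p > 0" using \<delta> by blast
  then obtain q where q: "q > 0" "\<And>p. p \<in> S \<Longrightarrow> pabs p (q - t p) < \<delta> p"
    "\<And>l. prime l \<Longrightarrow> l \<notin> S \<Longrightarrow> pabs l q \<le> 1"
    by (rule rat_strong_approximation[OF S, of \<delta> t]) (rule that)
  show ?thesis
  proof (rule that[OF q(1)])
    fix p assume "p \<in> S"
    then show "pnorm p (psub p (pmul p (pof_rat p q) (a p)) (b p)) < \<epsilon> p"
      using \<delta> q(2) by blast
  next
    fix p assume "prime p" "p \<notin> S"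
    then show "psub p (pmul p (pof_rat p q) (a p)) (b p) \<in> Zp p"
      using integral q(3) by (simp add: pscale_in_Zp psub_in_Zp)
  qed
qed

lemma orbit_meets_translated_nhd0:
  assumes a: "a \<in> finite_adeles" and b: "b \<in> finite_adeles"
    and zero: "\<forall>p. prime p \<longrightarrow> a p = pzero p \<longrightarrow> b p = pzero p" and U: "adele_nhd0 U"
  obtains q :: rat where "q > 0" "adele_sub (adele_scale q a) b \<in> U"
proof -
  obtain F e where F: "finite F" "\<forall>p\<in>F. prime p \<and> e p > 0"
    and box: "\<And>z. z \<in> finite_adeles \<Longrightarrow> \<forall>p\<in>F. pnorm p (z p) < e p \<Longrightarrow>
      \<forall>p. prime p \<and> p \<notin> F \<longrightarrow> z p \<in> Zp p \<Longrightarrow> z \<in> U"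
    by (rule adele_nhd0_box[OF U]) (rule that)
  define S where "S = F \<union> {p. prime p \<and> a p \<notin> Zp p} \<union> {p. prime p \<and> b p \<notin> Zp p}"
  have "finite {p. prime p \<and> a p \<notin> Zp p}" "finite {p. prime p \<and> b p \<notin> Zp p}"
    using a b by (simp_all add: finite_adeles_def)
  then have S: "finite S" "\<forall>p\<in>S. prime p"
    using F by (auto simp: S_def)
  have integral: "\<forall>p. prime p \<and> p \<notin> S \<longrightarrow> a p \<in> Zp p \<and> b p \<in> Zp p"
    by (simp add: S_def)
  \<comment> \<open>On \<open>S - F\<close> only integrality is required, and the open unit ball lies in \<open>Zp\<close>.\<close>
  define e' where "e' p = (if p \<in> F then e p else 1)" for p
  have e': "\<forall>p\<in>S. e' p > 0" using F(2) by (simp add: e'_def)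
  obtain q where q: "q > 0"
    "\<And>p. p \<in> S \<Longrightarrow> pnorm p (psub p (pmul p (pof_rat p q) (a p)) (b p)) < e' p"
    "\<And>p. prime p \<Longrightarrow> p \<notin> S \<Longrightarrow> psub p (pmul p (pof_rat p q) (a p)) (b p) \<in> Zp p"
    by (rule rat_scale_approx[OF a b zero S e' integral]) (rule that)
  have component: "adele_sub (adele_scale q a) b p = psub p (pmul p (pof_rat p q) (a p)) (b p)"
    if "prime p" for p
    using that by (simp add: adele_sub_def adele_scale_def)
  show ?thesis
  proof (rule that[OF q(1)], rule box)
    show "adele_sub (adele_scale q a) b \<in> finite_adeles"
      by (intro adele_sub_in_finite_adeles adele_scale_in_finite_adeles a b)
    show "\<forall>p\<in>F. pnorm p (adele_sub (adele_scale q a) b p) < e p"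
    proof
      fix p assume "p \<in> F"
      then have "p \<in> S" "prime p" using F(2) by (auto simp: S_def)
      then show "pnorm p (adele_sub (adele_scale q a) b p) < e p"
        using q(2)[OF \<open>p \<in> S\<close>] component[OF \<open>prime p\<close>] \<open>p \<in> F\<close> by (simp add: e'_def)
    qed
    show "\<forall>p. prime p \<and> p \<notin> F \<longrightarrow> adele_sub (adele_scale q a) b p \<in> Zp p"
    proof (intro allI impI)
      fix p assume p: "prime p \<and> p \<notin> F"
      show "adele_sub (adele_scale q a) b p \<in> Zp p"
      proof (cases "p \<in> S")
        case True
        have "psub p (pmul p (pof_rat p q) (a p)) (b p) \<in> Qp p"
          using p by (intro psub_in_Qp pscale_in_Qp finite_adeles_Qp a b) auto
        moreover have "pnorm p (psub p (pmul p (pof_rat p q) (a p)) (b p)) < 1"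
          using q(2)[OF True] p by (simp add: e'_def)
        ultimately show ?thesis using component p by (simp add: Zp_def)
      next
        case False
        then show ?thesis using q(3) component p by simp
      qed
    qed
  qed
qed

theorem lemma2p3:
  assumes "a \<in> finite_adeles"
  shows "adele_topology closure_of {adele_scale q a | q :: rat. q > 0}
         = {b \<in> finite_adeles. \<forall>p. prime p \<longrightarrow> a p = pzero p \<longrightarrow> b p = pzero p}"
proof (intro equalityI subsetI)
  fix b assume b: "b \<in> adele_topology closure_of {adele_scale q a | q :: rat. q > 0}"
  then have "b \<in> finite_adeles"
    unfolding in_closure_of topspace_adele_topology by (rule conjunct1)
  with closure_orbit_zero_coordinate[OF b]
  show "b \<in> {b \<in> finite_adeles. \<forall>p. prime p \<longrightarrow> a p = pzero p \<longrightarrow> b p = pzero p}"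
    by blast
next
  fix b assume b: "b \<in> {b \<in> finite_adeles. \<forall>p. prime p \<longrightarrow> a p = pzero p \<longrightarrow> b p = pzero p}"
  then have bA: "b \<in> finite_adeles" and bz: "\<forall>p. prime p \<longrightarrow> a p = pzero p \<longrightarrow> b p = pzero p"
    by auto
  have "\<exists>y. y \<in> {adele_scale q a | q :: rat. q > 0} \<and> y \<in> T"
    if T: "b \<in> T" "openin adele_topology T" for T
  proof -
    obtain U where U: "adele_nhd0 U" "{y \<in> finite_adeles. adele_sub y b \<in> U} \<subseteq> T"
      using T unfolding openin_adele_topology adele_open_def by blast
    obtain q :: rat where "q > 0" "adele_sub (adele_scale q a) b \<in> U"
      using orbit_meets_translated_nhd0[OF assms bA bz U(1)] by blast
    then show ?thesis
      using U(2) adele_scale_in_finite_adeles[OF assms] by blast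
  qed
  then show "b \<in> adele_topology closure_of {adele_scale q a | q :: rat. q > 0}"
    unfolding in_closure_of topspace_adele_topology using bA by blast
qed

end
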